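(* For parameters $r,s$, define $$B^{(r,s)}_{n,k}=\sum_{j=0}^n\binom{j}{k}\binom{n+k}{2j}s^jr^{\,n+k-2j}C_j,\qquad C_j=\tfrac1{j+1}\tbinom{2j}{j},$$ and the $(r,s)$-Borel polynomials $B^{(r,s)}_n(y)=\sum_{k=0}^nB^{(r,s)}_{n,k}y^k$. Then: (i) the $B^{(r,s)}_n(y)$ are the moments of the orthogonal polynomials whose coefficient array is the Riordan array $$\left(\frac{1+sxy}{1+(r+2sy)x+s(1+ry+sy^2)x^2},\ \frac{x}{1+(r+2sy)x+s(1+ry+sy^2)x^2}\right),$$ i.e. the first column of the inverse of this array has generating function $\sum_nB^{(r,s)}_n(y)x^n$; (ii) the generating function $B^{(r,s)}(x,y)=\sum_{n,k}B^{(r,s)}_{n,k}x^ny^k$ has the Jacobi continued fraction expansion $$B^{(r,s)}(x,y)=\cfrac{1}{1-(r+sy)x-\cfrac{(s+rsy+s^2y^2)x^2}{1-(r+2sy)x-\cfrac{(s+rsy+s^2y^2)x^2}{1-(r+2sy)x-\cdots}}}.$$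
   Context: A Riordan array $(g(x),f(x))$ is the lower-triangular matrix with $(n,k)$ entry $[x^n]g(x)f(x)^k$; the moments of the associated orthogonal polynomials are the entries of the first column of its inverse matrix. Continued fractions are interpreted as formal power series limits of convergents. Binomial coefficients with lower index out of range vanish. *)

theory Defs
  imports "HOL-Computational_Algebra.Formal_Power_Series"
begin

definition catalan :: "nat \<Rightarrow> nat" where
  "catalan j = ((2 * j) choose j) div (j + 1)"

definition borel_coeff :: "'a::comm_ring_1 \<Rightarrow> 'a \<Rightarrow> nat \<Rightarrow> nat \<Rightarrow> 'a" where
  "borel_coeff r s n k =
     (\<Sum>j = 0..n. of_nat (j choose k) * of_nat ((n + k) choose (2 * j)) * s ^ j
                  * r ^ (n + k - 2 * j) * of_nat (catalan j))"

definition borel_poly :: "'a::comm_ring_1 \<Rightarrow> 'a \<Rightarrow> nat \<Rightarrow> 'a \<Rightarrow> 'a" where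
  "borel_poly r s n y = (\<Sum>k = 0..n. borel_coeff r s n k * y ^ k)"

definition riordan :: "'a::comm_ring_1 fps \<Rightarrow> 'a fps \<Rightarrow> nat \<Rightarrow> nat \<Rightarrow> 'a" where
  "riordan g f n k = fps_nth (g * f ^ k) n"

text \<open>M is the (two-sided) inverse of the lower-triangular infinite matrix R:
  M is lower triangular and R M = M R = I (all sums finite by triangularity).\<close>
definition lt_inverse :: "(nat \<Rightarrow> nat \<Rightarrow> 'a::comm_ring_1) \<Rightarrow> (nat \<Rightarrow> nat \<Rightarrow> 'a) \<Rightarrow> bool" where
  "lt_inverse R M \<longleftrightarrow>
     (\<forall>n k. n < k \<longrightarrow> M n k = 0) \<and>
     (\<forall>n k. (\<Sum>j = k..n. R n j * M j k) = (if n = k then 1 else 0)) \<and>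
     (\<forall>n k. (\<Sum>j = k..n. M n j * R j k) = (if n = k then 1 else 0))"

text \<open>Convergents of the Jacobi continued fraction
  1/(1 - b_i x - a_{i+1} x^2/(1 - b_{i+1} x - ...)), truncated after N levels
  (the N-th convergent has innermost denominator 1 - b_{i+N-1} x).\<close>
fun jfrac :: "(nat \<Rightarrow> 'a::field) \<Rightarrow> (nat \<Rightarrow> 'a) \<Rightarrow> nat \<Rightarrow> nat \<Rightarrow> 'a fps" where
  "jfrac b a i 0 = 0"
| "jfrac b a i (Suc N) =
     inverse (1 - fps_const (b i) * fps_X - fps_const (a (Suc i)) * fps_X ^ 2 * jfrac b a (Suc i) N)"

end

theory Submission
  imports Defs
begin

(* The Catalan series C = \<Sum> C_j x^j satisfies C = 1 + x C^2, and a binomial expansion shows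
   B = W C(s x (x + y) W^2) with W = 1/(1 - r x); hence B (1 - r x) = 1 + s x (x + y) B^2.
   With T = B / (1 - s y x B) and a = s (1 + r y + s y^2) this quadratic splits into
   T = 1/(1 - (r + 2 s y) x - a x^2 T) and B = 1/(1 - (r + s y) x - a x^2 T), so the N-th
   convergent of the continued fraction agrees with B up to x^N.
   For D = 1 + (r + 2 s y) x + a x^2 the first equation reads D(x T) = T, i.e. x T is the
   compositional inverse of x / D, and B (1 + s y x T) = T then makes the Riordan array (B, x T)
   the inverse of (g, f); its first column is B. *)

unbundle fps_syntax

section \<open>Formal power series\<close>

lemma one_minus_const_X_mult_nth:
  fixes f :: "'a::comm_ring_1 fps"
  shows "((1 - fps_const c * fps_X) * f) $ n = f $ n - (if n = 0 then 0 else c * f $ (n - 1))"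
proof -
  have "(1 - fps_const c * fps_X) * f = f - fps_const c * (fps_X * f)"
    by (simp only: left_diff_distrib mult_1_left mult.assoc)
  then show ?thesis by simp
qed

lemma fps_linear_ode_unique:
  fixes Q :: "'a::field_char_0 fps"
  assumes ode: "(1 - fps_const c * fps_X) * fps_deriv Q = fps_const d * Q" and "Q $ 0 = 0"
  shows "Q = 0"
proof -
  have "Q $ n = 0" for n
  proof (induction n)
    case (Suc n)
    have "((1 - fps_const c * fps_X) * fps_deriv Q) $ n = (fps_const d * Q) $ n"
      by (simp only: ode)
    then have "of_nat (Suc n) * Q $ Suc n = c * of_nat n * Q $ n + d * Q $ n"
      by (cases n) (simp_all add: one_minus_const_X_mult_nth algebra_simps)
    with Suc show ?case by (simp del: of_nat_Suc)
  qed (simp add: assms)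
  then show ?thesis by (simp add: fps_eq_iff)
qed

lemma inverse_one_minus_const_X:
  "inverse (1 - fps_const (c :: 'a::field) * fps_X) = Abs_fps (\<lambda>n. c ^ n)"
proof (rule fps_inverse_unique, rule fps_ext)
  fix n
  show "((1 - fps_const c * fps_X) * Abs_fps (\<lambda>n. c ^ n)) $ n = (1 :: 'a fps) $ n"
    by (cases n) (simp_all add: one_minus_const_X_mult_nth)
qed

lemma inverse_one_minus_const_X_power_nth:
  "(inverse (1 - fps_const (c :: 'a::field) * fps_X) ^ Suc m) $ n = of_nat ((m + n) choose n) * c ^ n"
proof (induction m arbitrary: n)
  case (Suc m)
  let ?W = "inverse (1 - fps_const c * fps_X)"
  have "(?W ^ Suc (Suc m)) $ n = (?W ^ Suc m * ?W) $ n"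
    by (simp only: power_Suc2)
  also have "\<dots> = (\<Sum>i = 0..n. of_nat ((m + i) choose i) * c ^ i * c ^ (n - i))"
    by (simp only: fps_mult_nth Suc.IH) (simp add: inverse_one_minus_const_X)
  also have "\<dots> = of_nat (\<Sum>i\<le>n. (m + i) choose i) * c ^ n"
    by (simp add: sum_distrib_right atLeast0AtMost mult.assoc flip: power_add)
  finally show ?case by (simp add: sum_choose_lower)
qed (simp add: inverse_one_minus_const_X)

lemma fps_mult_compose_nth:
  fixes g h f :: "'a::comm_ring_1 fps"
  assumes "f $ 0 = 0"
  shows "(g * (h oo f)) $ n = (\<Sum>j = 0..n. (g * f ^ j) $ n * h $ j)"
proof -
  have compose_nth: "(h oo f) $ m = (\<Sum>j = 0..n. h $ j * (f ^ j) $ m)" if "m \<le> n" for m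
    unfolding fps_compose_nth
    by (rule sum.mono_neutral_left) (use that startsby_zero_power_prefix[OF assms] in auto)
  have "(g * (h oo f)) $ n = (\<Sum>i = 0..n. \<Sum>j = 0..n. g $ i * (h $ j * (f ^ j) $ (n - i)))"
    by (simp add: fps_mult_nth compose_nth sum_distrib_left)
  also have "\<dots> = (\<Sum>j = 0..n. \<Sum>i = 0..n. g $ i * (h $ j * (f ^ j) $ (n - i)))"
    by (rule sum.swap)
  also have "\<dots> = (\<Sum>j = 0..n. (g * f ^ j) $ n * h $ j)"
    unfolding fps_mult_nth sum_distrib_right by (intro sum.cong refl) (simp add: mult_ac)
  finally show ?thesis .
qed

lemma fps_nth_eq_if_X_power_dvd_diff:
  fixes f g :: "'a::comm_ring_1 fps"
  assumes "fps_X ^ Suc n dvd f - g"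
  shows "f $ n = g $ n"
proof -
  from assms obtain h where "f - g = fps_X ^ Suc n * h" by (elim dvdE)
  then have "(f - g) $ n = 0" by (simp add: fps_X_power_mult_nth del: power_Suc)
  then show ?thesis by simp
qed

section \<open>Catalan numbers\<close>

lemma catalan_0: "catalan 0 = 1"
  by (simp add: catalan_def)

lemma Suc_times_catalan: "Suc j * catalan j = (2 * j) choose j"
proof -
  define d where "d = ((2 * j) choose j) - ((2 * j) choose Suc j)"
  have "Suc j * ((2 * j) choose Suc j) = (2 * j - j) * ((2 * j) choose j)"
    by (simp only: binomial_absorption binomial_absorb_comp)
  then have central: "(2 * j) choose j = Suc j * d"
    unfolding d_def by (simp add: diff_mult_distrib2 del: binomial_Suc_Suc)
  then have "catalan j = d"
    by (simp add: catalan_def del: mult_Suc)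
  with central show ?thesis by simp
qed

lemma central_binomial_Suc_ratio:
  "Suc n * ((2 * Suc n) choose Suc n) = 2 * (2 * n + 1) * ((2 * n) choose n)"
proof -
  have two: "2 * Suc n = Suc (2 * n + 1)" by simp
  have "Suc n * ((2 * Suc n) choose Suc n) = 2 * Suc n * ((2 * n + 1) choose n)"
    unfolding two by (rule Suc_times_binomial)
  also have "(2 * n + 1) choose n = (2 * n + 1) choose Suc n"
    using binomial_symmetric[of n "2 * n + 1"] by simp
  also have "2 * Suc n * ((2 * n + 1) choose Suc n) = 2 * ((2 * n + 1) * ((2 * n) choose n))"
    using Suc_times_binomial[of n "2 * n"] by (simp only: mult.assoc Suc_eq_plus1)
  finally show ?thesis by (simp only: mult.assoc)
qed

lemma catalan_Suc_ratio: "(n + 2) * catalan (Suc n) = (4 * n + 2) * catalan n"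
proof -
  have "Suc n * ((n + 2) * catalan (Suc n)) = Suc n * ((2 * Suc n) choose Suc n)"
    using Suc_times_catalan[of "Suc n"] by (simp only: ac_simps Suc_eq_plus1 one_add_one add_2_eq_Suc')
  also have "\<dots> = Suc n * ((4 * n + 2) * catalan n)"
    unfolding central_binomial_Suc_ratio Suc_times_catalan[of n, symmetric] by (simp add: algebra_simps)
  finally show ?thesis by (simp only: mult_cancel_left) simp
qed

definition catalan_fps :: "'a::comm_ring_1 fps" where
  "catalan_fps = Abs_fps (\<lambda>n. of_nat (catalan n))"

lemma catalan_fps_quadratic_char_0:
  "fps_X * catalan_fps ^ 2 = catalan_fps - (1 :: 'a::field_char_0 fps)"
proof -
  define A :: "'a fps" where "A = 1 - 2 * fps_X * catalan_fps"
  have A_nth: "A $ n = (if n = 0 then 1 else - 2 * of_nat (catalan (n - 1)))" for n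
    by (simp add: A_def catalan_fps_def numeral_fps_const mult.assoc fps_X_mult_nth)
  have ode_A: "(1 - 4 * fps_X) * fps_deriv A = - 2 * A"
  proof (rule fps_ext)
    fix n
    show "((1 - 4 * fps_X) * fps_deriv A) $ n = (- 2 * A) $ n"
    proof (cases n)
      case (Suc m)
      have "of_nat (m + 2) * (of_nat (catalan (Suc m)) :: 'a) = of_nat (4 * m + 2) * of_nat (catalan m)"
        by (simp only: catalan_Suc_ratio flip: of_nat_mult)
      with Suc show ?thesis
        by (simp add: numeral_fps_const one_minus_const_X_mult_nth A_nth algebra_simps)
    qed (simp add: numeral_fps_const one_minus_const_X_mult_nth A_nth catalan_0)
  qed
  \<comment> \<open>\<open>A\<close> and \<open>sqrt (1 - 4x)\<close> solve the same linear ODE, hence \<open>A\<^sup>2 = 1 - 4x\<close>.\<close>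
  define Q where "Q = A^2 - (1 - 4 * fps_X)"
  have "(1 - 4 * fps_X) * fps_deriv Q = 2 * A * ((1 - 4 * fps_X) * fps_deriv A) + 4 * (1 - 4 * fps_X)"
    by (simp add: Q_def power2_eq_square algebra_simps)
  also have "\<dots> = - 4 * Q"
    unfolding ode_A Q_def by (simp add: power2_eq_square algebra_simps)
  finally have "Q = 0"
    by (intro fps_linear_ode_unique[of 4 Q "- 4"]) (simp_all add: numeral_fps_const Q_def A_nth power2_eq_square)
  then have "4 * fps_X * (fps_X * catalan_fps ^ 2 - (catalan_fps - 1)) = (0 :: 'a fps)"
    by (simp add: Q_def A_def power2_eq_square algebra_simps)
  then show ?thesis by simp
qed

(* The ODE argument needs characteristic 0; read as an identity of natural numbers, the
   recurrence transfers the quadratic equation to arbitrary rings. *)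
lemma catalan_Suc_convolution: "catalan (Suc n) = (\<Sum>i = 0..n. catalan i * catalan (n - i))"
proof -
  have "(fps_X * catalan_fps ^ 2) $ Suc n = (catalan_fps - 1 :: rat fps) $ Suc n"
    by (simp only: catalan_fps_quadratic_char_0)
  then have "(of_nat (\<Sum>i = 0..n. catalan i * catalan (n - i)) :: rat) = of_nat (catalan (Suc n))"
    by (simp only: fps_X_mult_nth power2_eq_square) (simp add: catalan_fps_def fps_mult_nth)
  then show ?thesis by (simp only: of_nat_eq_iff)
qed

lemma catalan_fps_quadratic: "(catalan_fps :: 'a::comm_ring_1 fps) = 1 + fps_X * catalan_fps ^ 2"
proof (rule fps_ext)
  fix n
  show "catalan_fps $ n = (1 + fps_X * catalan_fps ^ 2 :: 'a fps) $ n"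
    by (cases n) (simp_all only: fps_add_nth fps_X_mult_nth power2_eq_square,
        simp_all add: catalan_fps_def fps_mult_nth catalan_0 catalan_Suc_convolution)
qed

section \<open>The generating function of the Borel polynomials\<close>

definition borel_fps :: "'a::comm_ring_1 \<Rightarrow> 'a \<Rightarrow> 'a \<Rightarrow> 'a fps" where
  "borel_fps r s y = Abs_fps (\<lambda>n. borel_poly r s n y)"

lemma borel_compose_power_expansion:
  fixes r s y :: "'a::field"
  defines "W \<equiv> inverse (1 - fps_const r * fps_X)"
  defines "Z \<equiv> fps_const s * fps_X * (fps_X + fps_const y) * W ^ 2"
  shows "W * Z ^ j = (\<Sum>k = 0..j. fps_const (of_nat (j choose k) * s ^ j * y ^ k)
                                  * fps_X ^ (2 * j - k) * W ^ Suc (2 * j))"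
proof -
  have "W * Z ^ j = fps_const (s ^ j) * fps_X ^ j * (fps_const y + fps_X) ^ j * W ^ Suc (2 * j)"
    unfolding Z_def by (simp add: power_mult_distrib power_mult[symmetric] fps_const_power ac_simps)
  also have "\<dots> = (\<Sum>k = 0..j. fps_const (of_nat (j choose k) * s ^ j * y ^ k) * fps_X ^ (2 * j - k)
                                * W ^ Suc (2 * j))"
    unfolding binomial_ring atLeast0AtMost sum_distrib_left sum_distrib_right
  proof (rule sum.cong[OF refl])
    fix k assume "k \<in> {..j}"
    then have "fps_X ^ j * fps_X ^ (j - k) = (fps_X ^ (2 * j - k) :: 'a fps)"
      by (simp flip: power_add)
    then show "fps_const (s ^ j) * fps_X ^ j * (of_nat (j choose k) * fps_const y ^ k * fps_X ^ (j - k))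
        * W ^ Suc (2 * j) = fps_const (of_nat (j choose k) * s ^ j * y ^ k) * fps_X ^ (2 * j - k) * W ^ Suc (2 * j)"
      by (simp add: fps_of_nat[symmetric] fps_const_power ac_simps)
  qed
  finally show ?thesis .
qed

lemma borel_compose_power_nth:
  fixes r s y :: "'a::field"
  defines "W \<equiv> inverse (1 - fps_const r * fps_X)"
  defines "Z \<equiv> fps_const s * fps_X * (fps_X + fps_const y) * W ^ 2"
  shows "(W * Z ^ j) $ n = (\<Sum>k = 0..j. of_nat (j choose k) * of_nat ((n + k) choose (2 * j))
                                          * s ^ j * r ^ (n + k - 2 * j) * y ^ k)"
proof -
  have expand: "W * Z ^ j = (\<Sum>k = 0..j. fps_const (of_nat (j choose k) * s ^ j * y ^ k)
                                          * fps_X ^ (2 * j - k) * W ^ Suc (2 * j))"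
    unfolding W_def Z_def by (rule borel_compose_power_expansion)
  have "(W * Z ^ j) $ n = (\<Sum>k = 0..j. of_nat (j choose k) * s ^ j * y ^ k
      * (if n < 2 * j - k then 0 else of_nat ((n + k) choose (2 * j)) * r ^ (n + k - 2 * j)))"
    unfolding expand fps_sum_nth
  proof (rule sum.cong[OF refl])
    fix k assume "k \<in> {0..j}"
    then have "k \<le> j" by simp
    have "2 * j + (n - (2 * j - k)) = n + k" "n - (2 * j - k) = n + k - 2 * j"
      and "(n + k) choose (n + k - 2 * j) = (n + k) choose (2 * j)" if "\<not> n < 2 * j - k"
      using that \<open>k \<le> j\<close> by (auto intro: binomial_symmetric[symmetric])
    then show "(fps_const (of_nat (j choose k) * s ^ j * y ^ k) * fps_X ^ (2 * j - k) * W ^ Suc (2 * j)) $ n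
        = of_nat (j choose k) * s ^ j * y ^ k
          * (if n < 2 * j - k then 0 else of_nat ((n + k) choose (2 * j)) * r ^ (n + k - 2 * j))"
      by (simp only: mult.assoc fps_mult_left_const_nth fps_X_power_mult_nth W_def
                     inverse_one_minus_const_X_power_nth) simp
  qed
  also have "\<dots> = (\<Sum>k = 0..j. of_nat (j choose k) * of_nat ((n + k) choose (2 * j))
                                          * s ^ j * r ^ (n + k - 2 * j) * y ^ k)"
    by (intro sum.cong refl) (auto simp: binomial_eq_0)
  finally show ?thesis .
qed

lemma borel_fps_eq_catalan_compose:
  fixes r s y :: "'a::field"
  defines "W \<equiv> inverse (1 - fps_const r * fps_X)"
  defines "Z \<equiv> fps_const s * fps_X * (fps_X + fps_const y) * W ^ 2"
  shows "borel_fps r s y = W * (catalan_fps oo Z)"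
proof (rule fps_ext)
  fix n
  have "Z $ 0 = 0"
    unfolding Z_def by (simp add: mult.commute[of _ fps_X] mult.assoc)
  then have "(W * (catalan_fps oo Z)) $ n = (\<Sum>j = 0..n. (W * Z ^ j) $ n * of_nat (catalan j))"
    by (simp add: fps_mult_compose_nth catalan_fps_def)
  also have "\<dots> = (\<Sum>j = 0..n. \<Sum>k = 0..n. of_nat (j choose k) * of_nat ((n + k) choose (2 * j))
                                  * s ^ j * r ^ (n + k - 2 * j) * of_nat (catalan j) * y ^ k)"
  proof (rule sum.cong[OF refl])
    fix j assume "j \<in> {0..n}"
    then have "(\<Sum>k = 0..j. of_nat (j choose k) * of_nat ((n + k) choose (2 * j)) * s ^ j
                  * r ^ (n + k - 2 * j) * of_nat (catalan j) * y ^ k)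
        = (\<Sum>k = 0..n. of_nat (j choose k) * of_nat ((n + k) choose (2 * j)) * s ^ j
                  * r ^ (n + k - 2 * j) * of_nat (catalan j) * y ^ k :: 'a)"
      by (intro sum.mono_neutral_left) (auto simp: binomial_eq_0)
    then show "(W * Z ^ j) $ n * of_nat (catalan j) = (\<Sum>k = 0..n. of_nat (j choose k)
        * of_nat ((n + k) choose (2 * j)) * s ^ j * r ^ (n + k - 2 * j) * of_nat (catalan j) * y ^ k)"
      unfolding W_def Z_def borel_compose_power_nth sum_distrib_right by (simp add: ac_simps)
  qed
  also have "\<dots> = borel_poly r s n y"
    unfolding borel_poly_def borel_coeff_def sum_distrib_right by (rule sum.swap)
  finally show "borel_fps r s y $ n = (W * (catalan_fps oo Z)) $ n"
    by (simp add: borel_fps_def)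
qed

lemma borel_fps_quadratic:
  fixes r s y :: "'a::field"
  defines "B \<equiv> borel_fps r s y"
  shows "B * (1 - fps_const r * fps_X) = 1 + fps_const s * fps_X * (fps_X + fps_const y) * B ^ 2"
proof -
  define W where "W = inverse (1 - fps_const r * fps_X)"
  define Z where "Z = fps_const s * fps_X * (fps_X + fps_const y) * W ^ 2"
  define C where "C = catalan_fps oo Z"
  have "Z $ 0 = 0"
    unfolding Z_def by (simp add: mult.commute[of _ fps_X] mult.assoc)
  then have C_quadratic: "C = 1 + Z * C ^ 2"
    unfolding C_def
    by (subst catalan_fps_quadratic)
       (simp add: fps_compose_add_distrib fps_compose_mult_distrib fps_compose_power)
  have B_eq: "B = W * C"
    unfolding B_def W_def Z_def C_def by (rule borel_fps_eq_catalan_compose)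
  have "W * (1 - fps_const r * fps_X) = 1"
    unfolding W_def by (simp add: inverse_mult_eq_1)
  then have "B * (1 - fps_const r * fps_X) = C"
    unfolding B_eq by (metis mult.commute mult.left_commute mult_1_right)
  also have "\<dots> = 1 + fps_const s * fps_X * (fps_X + fps_const y) * B ^ 2"
    by (subst C_quadratic) (simp add: B_eq Z_def power_mult_distrib ac_simps)
  finally show ?thesis .
qed

lemma jacobi_equations_from_quadratic:
  fixes B T R S Y X :: "'a::idom"
  defines "u \<equiv> 1 - S * Y * X * B"
  assumes quadratic: "B * (1 - R * X) = 1 + S * X * (X + Y) * B ^ 2"
    and Tu: "T * u = B" and "u \<noteq> 0"
  shows "T * (1 - (R + 2 * S * Y) * X - S * (1 + R * Y + S * Y ^ 2) * X ^ 2 * T) = 1"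
    and "B * (1 - (R + S * Y) * X - S * (1 + R * Y + S * Y ^ 2) * X ^ 2 * T) = 1"
proof -
  let ?a = "S * (1 + R * Y + S * Y ^ 2)"
  have "u ^ 2 * (T * (1 - (R + 2 * S * Y) * X - ?a * X ^ 2 * T) - 1)
      = u * (T * u) * (1 - (R + 2 * S * Y) * X) - ?a * X ^ 2 * (T * u) ^ 2 - u ^ 2"
    by (simp add: algebra_simps power2_eq_square)
  also have "\<dots> = B * (1 - R * X) - (1 + S * X * (X + Y) * B ^ 2)"
    unfolding Tu by (simp add: u_def algebra_simps power2_eq_square)
  finally show "T * (1 - (R + 2 * S * Y) * X - ?a * X ^ 2 * T) = 1"
    using quadratic \<open>u \<noteq> 0\<close> by simp
  have "u * (B * (1 - (R + S * Y) * X - ?a * X ^ 2 * T) - 1)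
      = u * B * (1 - (R + S * Y) * X) - ?a * X ^ 2 * B * (T * u) - u"
    by (simp add: algebra_simps power2_eq_square)
  also have "\<dots> = B * (1 - R * X) - (1 + S * X * (X + Y) * B ^ 2)"
    unfolding Tu by (simp add: u_def algebra_simps power2_eq_square)
  finally show "B * (1 - (R + S * Y) * X - ?a * X ^ 2 * T) = 1"
    using quadratic \<open>u \<noteq> 0\<close> by simp
qed

lemma borel_fps_jacobi_equations:
  fixes r s y :: "'a::field"
  defines "B \<equiv> borel_fps r s y"
  defines "a \<equiv> s * (1 + r * y + s * y ^ 2)"
  obtains T where "T * (1 - fps_const (r + 2 * s * y) * fps_X - fps_const a * fps_X ^ 2 * T) = 1"
    and "B * (1 - fps_const (r + s * y) * fps_X - fps_const a * fps_X ^ 2 * T) = 1"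
    and "B * (1 + fps_const (s * y) * fps_X * T) = T"
proof -
  define R S Y where "R = fps_const r" and "S = fps_const s" and "Y = fps_const y"
  have quadratic: "B * (1 - R * fps_X) = 1 + S * fps_X * (fps_X + Y) * B ^ 2"
    unfolding B_def R_def S_def Y_def by (rule borel_fps_quadratic)
  define u where "u = 1 - S * Y * fps_X * B"
  have "u $ 0 = 1"
    unfolding u_def by (simp add: mult.commute[of _ fps_X] mult.assoc)
  then have "u \<noteq> 0" by auto
  \<comment> \<open>\<open>T\<close> is the common tail of the continued fraction below its first level.\<close>
  define T where "T = B * inverse u"
  have Tu: "T * u = B"
    unfolding T_def using \<open>u $ 0 = 1\<close> by (simp add: mult.assoc inverse_mult_eq_1)
  have fps_consts: "fps_const (r + 2 * s * y) = R + 2 * S * Y" "fps_const (r + s * y) = R + S * Y"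
      "fps_const a = S * (1 + R * Y + S * Y ^ 2)" "fps_const (s * y) = S * Y"
    by (simp_all add: a_def R_def S_def Y_def numeral_fps_const fps_const_power
                 flip: fps_const_1_eq_1 fps_const_mult fps_const_add del: fps_const_1_eq_1)
  note jacobi = jacobi_equations_from_quadratic[OF quadratic Tu[unfolded u_def] \<open>u \<noteq> 0\<close>[unfolded u_def]]
  have "B * (1 + S * Y * fps_X * T) = T"
    using Tu unfolding u_def by (simp add: algebra_simps)
  with jacobi show thesis
    by (intro that) (simp_all only: fps_consts)
qed

section \<open>Convergence of the continued fraction\<close>

lemma X_power_dvd_inverse_jacobi_diff:
  fixes J K :: "'a::field fps"
  assumes "fps_X ^ N dvd J - K"
  shows "fps_X ^ Suc N dvd inverse (1 - fps_const c * fps_X - fps_const a * fps_X ^ 2 * J)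
                              - inverse (1 - fps_const c * fps_X - fps_const a * fps_X ^ 2 * K)"
proof -
  define P Q where "P = 1 - fps_const c * fps_X - fps_const a * fps_X ^ 2 * J"
    and "Q = 1 - fps_const c * fps_X - fps_const a * fps_X ^ 2 * K"
  have "P $ 0 \<noteq> 0" "Q $ 0 \<noteq> 0"
    unfolding P_def Q_def by (simp_all add: mult.assoc)
  then have "inverse P - inverse Q = inverse P * inverse Q * (Q - P)"
    by (simp add: algebra_simps inverse_mult_eq_1 inverse_mult_eq_1')
  also have "Q - P = fps_X * (fps_const a * fps_X * (J - K))"
    unfolding P_def Q_def by (simp add: algebra_simps power2_eq_square)
  finally show ?thesis
    using assms unfolding P_def Q_def by (simp add: mult_dvd_mono dvd_mult)
qed

lemma jfrac_tendsto:
  fixes b0 b a :: "'a::field" and T B :: "'a fps"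
  assumes T: "T * (1 - fps_const b * fps_X - fps_const a * fps_X ^ 2 * T) = 1"
    and B: "B * (1 - fps_const b0 * fps_X - fps_const a * fps_X ^ 2 * T) = 1"
  shows "(\<lambda>N. jfrac (\<lambda>i. if i = 0 then b0 else b) (\<lambda>i. a) 0 N) \<longlonglongrightarrow> B"
proof -
  let ?J = "jfrac (\<lambda>i. if i = 0 then b0 else b) (\<lambda>i. a)"
  have T_eq: "T = inverse (1 - fps_const b * fps_X - fps_const a * fps_X ^ 2 * T)"
    using fps_inverse_unique T by (metis mult.commute)
  have B_eq: "B = inverse (1 - fps_const b0 * fps_X - fps_const a * fps_X ^ 2 * T)"
    using fps_inverse_unique B by (metis mult.commute)
  have tail: "fps_X ^ N dvd ?J i N - T" if "i > 0" for i N
    using that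
  proof (induction N arbitrary: i)
    case (Suc N)
    have "fps_X ^ Suc N dvd inverse (1 - fps_const b * fps_X - fps_const a * fps_X ^ 2 * ?J (Suc i) N)
        - inverse (1 - fps_const b * fps_X - fps_const a * fps_X ^ 2 * T)"
      using Suc.IH by (intro X_power_dvd_inverse_jacobi_diff) simp
    with Suc.prems show ?case
      by (subst T_eq) simp
  qed simp
  have approx: "fps_X ^ Suc N dvd ?J 0 (Suc N) - B" for N
    by (subst B_eq) (simp add: X_power_dvd_inverse_jacobi_diff tail del: power_Suc)
  show ?thesis
  proof (rule tendsto_fpsI)
    fix n
    have "?J 0 N $ n = B $ n" if "N \<ge> Suc n" for N
    proof -
      obtain M where "N = Suc M" "n \<le> M" using \<open>N \<ge> Suc n\<close> by (cases N) auto
      then have "fps_X ^ Suc n dvd ?J 0 N - B"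
        using approx[of M] le_imp_power_dvd[of "Suc n" "Suc M"] by (auto intro: dvd_trans)
      then show ?thesis by (rule fps_nth_eq_if_X_power_dvd_diff)
    qed
    then show "eventually (\<lambda>N. ?J 0 N $ n = B $ n) sequentially"
      unfolding eventually_sequentially by blast
  qed
qed

section \<open>Riordan arrays\<close>

lemma riordan_eq_0_above_diagonal:
  fixes g f :: "'a::comm_ring_1 fps"
  assumes "f $ 0 = 0" and "n < k"
  shows "riordan g f n k = 0"
  unfolding riordan_def fps_mult_nth
  using startsby_zero_power_prefix[OF assms(1)] assms(2) by (intro sum.neutral) auto

lemma riordan_mult_eq_identity:
  fixes g f G F :: "'a::idom fps"
  assumes f0: "f $ 0 = 0" and F0: "F $ 0 = 0"
    and "F oo f = fps_X" and "g * (G oo f) = 1"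
  shows "(\<Sum>j = k..n. riordan g f n j * riordan G F j k) = (if n = k then 1 else 0)"
proof -
  have "(\<Sum>j = k..n. riordan g f n j * riordan G F j k) = (\<Sum>j = 0..n. (g * f ^ j) $ n * (G * F ^ k) $ j)"
    unfolding riordan_def using riordan_eq_0_above_diagonal[OF F0, unfolded riordan_def]
    by (intro sum.mono_neutral_left) auto
  also have "\<dots> = (g * ((G * F ^ k) oo f)) $ n"
    by (rule fps_mult_compose_nth[OF f0, symmetric])
  also have "g * ((G * F ^ k) oo f) = fps_X ^ k"
    using assms by (simp add: fps_compose_mult_distrib flip: fps_compose_power mult.assoc)
  finally show ?thesis by simp
qed

lemma riordan_lt_inverse:
  fixes g f G F :: "'a::idom fps"
  assumes f0: "f $ 0 = 0" and F0: "F $ 0 = 0" and F1: "F $ 1 \<noteq> 0"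
    and fF: "f oo F = fps_X" and GgF: "G * (g oo F) = 1"
  shows "lt_inverse (riordan g f) (riordan G F)"
proof -
  have "(F oo f) oo F = F oo (f oo F)"
    by (rule fps_compose_assoc[OF F0 f0, symmetric])
  then have "(F oo f) oo F = fps_X oo F"
    using F0 fF by simp
  then have Ff: "F oo f = fps_X"
    using fps_compose_inj_right[OF F0 F1] by blast
  have "(G * (g oo F)) oo f = 1"
    using GgF by simp
  then have gGf: "g * (G oo f) = 1"
    using f0 F0 Ff by (simp add: fps_compose_mult_distrib fps_compose_assoc[symmetric] mult.commute)
  show ?thesis
    unfolding lt_inverse_def
    using riordan_eq_0_above_diagonal[OF F0] riordan_mult_eq_identity[OF f0 F0 Ff gGf]
      riordan_mult_eq_identity[OF F0 f0 fF GgF]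
    by blast
qed

lemma sum_triangle_swap:
  "(\<Sum>j = k..n. \<Sum>l = k..j. a j l) = (\<Sum>l = k..(n::nat). \<Sum>j = l..n. (a j l :: 'a::comm_monoid_add))"
proof -
  have "(\<Sum>j = k..n. \<Sum>l = k..j. a j l) = (\<Sum>j \<in> {k..n}. \<Sum>l \<in> {l. l \<in> {k..n} \<and> l \<le> j}. a j l)"
    by (intro sum.cong) auto
  also have "\<dots> = (\<Sum>l \<in> {k..n}. \<Sum>j \<in> {j. j \<in> {k..n} \<and> l \<le> j}. a j l)"
    by (rule sum.swap_restrict) simp_all
  also have "\<dots> = (\<Sum>l = k..n. \<Sum>j = l..n. a j l)"
    by (intro sum.cong) auto
  finally show ?thesis .
qed

lemma lt_inverse_unique:
  assumes M: "lt_inverse R M" and M': "lt_inverse R M'"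
  shows "M = M'"
proof (intro ext)
  fix n k
  show "M n k = M' n k"
  proof (cases "n < k")
    case True
    with M M' show ?thesis by (simp add: lt_inverse_def)
  next
    case False
    have RM': "(\<Sum>l = k..j. R j l * M' l k) = (if j = k then 1 else 0)" for j
      using M' by (simp add: lt_inverse_def)
    have MR: "(\<Sum>j = l..n. M n j * R j l) = (if n = l then 1 else 0)" for l
      using M by (simp add: lt_inverse_def)
    have "M n k = (\<Sum>j = k..n. M n j * (\<Sum>l = k..j. R j l * M' l k))"
      using False by (simp add: RM' if_distrib sum.delta' cong: if_cong)
    also have "\<dots> = (\<Sum>l = k..n. (\<Sum>j = l..n. M n j * R j l) * M' l k)"
      by (simp add: sum_distrib_left sum_distrib_right sum_triangle_swap mult.assoc)
    also have "\<dots> = (\<Sum>l = k..n. if n = l then M' l k else 0)"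
      by (intro sum.cong) (simp_all add: MR)
    also have "\<dots> = M' n k"
      using False by simp
    finally show ?thesis .
  qed
qed

lemma jacobi_riordan_lt_inverse:
  fixes a b c :: "'a::field" and T B :: "'a fps"
  defines "D \<equiv> 1 + fps_const b * fps_X + fps_const a * fps_X ^ 2"
  assumes T: "T * (1 - fps_const b * fps_X - fps_const a * fps_X ^ 2 * T) = 1"
    and B: "B * (1 + fps_const c * fps_X * T) = T"
  shows "lt_inverse (riordan ((1 + fps_const c * fps_X) * inverse D) (fps_X * inverse D))
                    (riordan B (fps_X * T))"
proof (rule riordan_lt_inverse)
  have "(T * (1 - fps_const b * fps_X - fps_const a * fps_X ^ 2 * T)) $ 0 = 1"
    by (simp only: T) simp
  then have T0: "T $ 0 = 1"
    by (simp add: mult.assoc)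
  show F0: "(fps_X * T) $ 0 = 0" and "(fps_X * T) $ 1 \<noteq> 0"
    using T0 by simp_all
  have "D $ 0 = 1"
    unfolding D_def by (simp add: mult.assoc)
  have "D oo fps_X * T = 1 + fps_const b * (fps_X * T) + fps_const a * (fps_X * T) ^ 2"
    unfolding D_def using F0 by (simp add: fps_compose_add_distrib fps_compose_mult_distrib fps_X_power_compose)
  also have "\<dots> = T"
    using T by (simp add: algebra_simps power2_eq_square)
  finally have DF: "D oo fps_X * T = T" .
  show "fps_X * inverse D oo fps_X * T = fps_X"
    using F0 \<open>D $ 0 = 1\<close> T0
    by (simp add: fps_compose_mult_distrib fps_inverse_compose DF mult.assoc inverse_mult_eq_1')
  show "B * ((1 + fps_const c * fps_X) * inverse D oo fps_X * T) = 1"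
    using F0 \<open>D $ 0 = 1\<close> T0 B
    by (simp add: fps_compose_add_distrib fps_compose_mult_distrib fps_inverse_compose DF
        mult.assoc[symmetric] inverse_mult_eq_1')
  show "(fps_X * inverse D) $ 0 = 0"
    by simp
qed

theorem mainTheorem10:
  fixes r s y :: "'a::field"
  defines "D \<equiv> 1 + fps_const (r + 2 * s * y) * fps_X
                 + fps_const (s * (1 + r * y + s * y ^ 2)) * fps_X ^ 2"
  defines "g \<equiv> (1 + fps_const (s * y) * fps_X) * inverse D"
  defines "f \<equiv> fps_X * inverse D"
  defines "B \<equiv> Abs_fps (\<lambda>n. borel_poly r s n y)"
  shows "(\<exists>M. lt_inverse (riordan g f) M)
       \<and> (\<forall>M. lt_inverse (riordan g f) M \<longrightarrow> (\<forall>n. M n 0 = fps_nth B n))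
       \<and> (\<lambda>N. jfrac (\<lambda>i. if i = 0 then r + s * y else r + 2 * s * y)
                     (\<lambda>i. s + r * s * y + s ^ 2 * y ^ 2) 0 N) \<longlonglongrightarrow> B"
proof -
  have B_borel: "B = borel_fps r s y"
    unfolding B_def borel_fps_def ..
  obtain T
    where T: "T * (1 - fps_const (r + 2 * s * y) * fps_X
                  - fps_const (s * (1 + r * y + s * y ^ 2)) * fps_X ^ 2 * T) = 1"
      and B_T: "B * (1 - fps_const (r + s * y) * fps_X
                  - fps_const (s * (1 + r * y + s * y ^ 2)) * fps_X ^ 2 * T) = 1"
      and B_cT: "B * (1 + fps_const (s * y) * fps_X * T) = T"
    using borel_fps_jacobi_equations[of r s y, folded B_borel] .
  have inverse: "lt_inverse (riordan g f) (riordan B (fps_X * T))"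
    unfolding g_def f_def D_def by (rule jacobi_riordan_lt_inverse[OF T B_cT])
  moreover have "M n 0 = B $ n" if "lt_inverse (riordan g f) M" for M n
    using lt_inverse_unique[OF that inverse] by (simp add: riordan_def)
  moreover have "s + r * s * y + s ^ 2 * y ^ 2 = s * (1 + r * y + s * y ^ 2)"
    by (simp add: algebra_simps power2_eq_square)
  ultimately show ?thesis
    using jfrac_tendsto[OF T B_T] by auto
qed

end
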